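(* Let $s$ be a CorePolyC statement and $\ell\in\{\#t,\#f\}$. There are constants $C,d,k$ (depending only on $s$) such that for every consistent pair $(\Gamma,\Sigma)$ with $\Gamma,\ell\vdash s:\Gamma'$ and $\Sigma\vdash s\Downarrow\Sigma'$ for some $\Gamma',\Sigma'$: (1) if $\ell=\#t$, then $\mathrm{sz}(\Sigma')\mathbin{\dot-}\mathrm{sz}(\Sigma)\le C\,(\mathrm{sz}(\Sigma|_{\mathrm{dom}_I(\Gamma)})^{d}+1)$; (2) if $\ell=\#f$, then $\mathrm{sz}(\Sigma')\mathbin{\dot-}\mathrm{sz}(\Sigma)\le C\,(\mathrm{sz}(\Sigma)^{d^{k}}+1)$.
   Context: CorePolyC. Types are $\mathtt{iint},\mathtt{int},\mathtt{bool}$; $\mathsf{Int}=\{\mathtt{iint},\mathtt{int}\}$, ordered by $\mathtt{iint}\preccurlyeq\mathtt{int}$. Values are unbounded integers ($\mathbb Z$) and booleans $\#t,\#f$. A value $v$ is consistent with a type $t$ if ($v\in\mathbb Z$ and $t\in\mathsf{Int}$) or ($v$ boolean and $t=\mathtt{bool}$). Expressions: variables $x$; constants (nonempty decimal digit strings denoting natural numbers; $\mathtt{true}$, $\mathtt{false}$); operator applications $\mathtt{op}(e_1,\dots,e_m)$; parenthesized $(e)$. Operators and semantics: unary $-$ (negation); binary $+,-,/,\%$ (integer addition, subtraction, division, remainder, with division and remainder by $0$ returning $0$); $\mathtt{size}$, with $\mathtt{size}(v)=\lceil\log_2(\mathrm{abs}(v)+1)\rceil$; comparisons $\texttt{>=},\texttt{<=},\texttt{>},\texttt{<},\texttt{==},\texttt{!=}$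 on integers returning booleans; boolean $\texttt{!},\texttt{\&\&},\texttt{||}$. Statements: declaration $t\ x;$; assignment $x=e;$; block $\{s_1\dots s_m\}$; conditional $\mathbf{if}(e)\ s_1\ \mathbf{else}\ s_2$; loop $\mathbf{for}(x<\mathtt{size}(e))\ s$ (loop bounds are always syntactically of the form $\mathtt{size}(e)$). Semantics (big-step). A store $\Sigma$ is a finite partial map from variables to values; $\Sigma[x\mapsto v]$ is the update. $\Sigma\vdash e\Downarrow v$: a variable $x\in\mathrm{dom}\,\Sigma$ evaluates to $\Sigma(x)$, constants to their value, $\mathtt{op}(e_1,\dots,e_m)$ to $\mathtt{op}$ applied to the values of the $e_i$. $\Sigma\vdash s\Downarrow\Sigma'$: $t\ x;$ gives $\Sigma[x\mapsto 0]$ if $t\in\mathsf{Int}$ and $\Sigma[x\mapsto\#f]$ if $t=\mathtt{bool}$; $x=e;$ (with $x\in\mathrm{dom}\,\Sigma$) gives $\Sigma[x\mapsto v]$ where $\Sigma\vdash e\Downarrow v$; a sequence or block executes its statements in order threading the store (a block returns the final store); a conditional evaluates its guard to a boolean and executes the corresponding branch; $\mathbf{for}(x<e)\ s$ evaluates $e$ once to an integer $i$, sets $\Sigma_0=\Sigma$, executes $s$ from $\Sigma_j[x\mapsto j]$ obtaining $\Sigma_{j+1}$ for $j=0,\dots,i-1$, and ends in $\Sigma_i$ (i.e. in $\Sigma$ if $i\le 0$). Type system. A typing environment $\Gamma$ is a finite partial map from variables to types; $\ell\in\{\#t,\#f\}$ is the loop indicator. Expression typing $\Gamma,\ell\vdash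 e:t$: a variable $x\in\mathrm{dom}\,\Gamma$ has type $\Gamma(x)$; digit literals have type $\mathtt{iint}$, $\mathtt{true},\mathtt{false}$ have type $\mathtt{bool}$; $\texttt{!},\texttt{\&\&},\texttt{||}$ take $\mathtt{bool}$ arguments to $\mathtt{bool}$; comparisons take arguments with types in $\mathsf{Int}$ to $\mathtt{bool}$; $+,-,/,\%$ take arguments with types in $\mathsf{Int}$ to their supremum under $\preccurlyeq$ ($\mathtt{iint}$ iff all arguments are $\mathtt{iint}$); $\mathtt{size}$ takes only an $\mathtt{iint}$ argument, giving $\mathtt{iint}$; parentheses preserve types. Statement typing $\Gamma,\ell\vdash s:\Gamma'$: $t\ x;$ is typable iff $x\notin\mathrm{dom}\,\Gamma$ and not($\ell=\#t$ and $t=\mathtt{iint}$), giving $\Gamma[x\mapsto t]$; $x=e;$ is typable iff $x\in\mathrm{dom}\,\Gamma$, not($\ell=\#t$ and $\Gamma(x)=\mathtt{iint}$), and $\Gamma,\ell\vdash e:t$ with $t,\Gamma(x)$ both in $\mathsf{Int}$ or both $\mathtt{bool}$, giving $\Gamma$; a sequence $s_1\dots s_m$ threads $\Gamma_0=\Gamma$, $\Gamma_{i-1},\ell\vdash s_i:\Gamma_i$, giving $\Gamma_m$; a block $\{\tilde s\}$ is typable if its sequence is, giving $\Gamma$; a conditional needs a guard of type $\mathtt{bool}$ and both branches typable under $\Gamma,\ell$, giving $\Gamma$; $\mathbf{for}(x<e)\ s$ needs $\Gamma,\ell\vdash e:\mathtt{iint}$, $x\notin\mathrm{dom}\,\Gamma$,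 and $\Gamma[x\mapsto\mathtt{iint}],\#t\vdash s:\Gamma'$ for some $\Gamma'$, giving $\Gamma$. A store $\Sigma$ and typing environment $\Gamma$ are consistent (form a consistent pair) if $\mathrm{dom}\,\Gamma\subseteq\mathrm{dom}\,\Sigma$ and $\Sigma(x)$ is consistent with $\Gamma(x)$ for all $x\in\mathrm{dom}\,\Gamma$. $\mathrm{dom}_I(\Gamma)=\{x\in\mathrm{dom}\,\Gamma:\Gamma(x)=\mathtt{iint}\}$ and $\Sigma|_D$ is the restriction of $\Sigma$ to $D$. Sizes: $\mathrm{sz}(v)=\lceil\log_2(\mathrm{abs}(v)+1)\rceil$ for $v\in\mathbb Z$, $\mathrm{sz}(\#t)=\mathrm{sz}(\#f)=1$, $\mathrm{sz}(\Sigma)=\max_{x\in\mathrm{dom}\,\Sigma}\mathrm{sz}(\Sigma(x))$ ($0$ if empty). $a\mathbin{\dot-}b=\max(a-b,0)$. *)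

theory Defs
  imports Complex_Main
begin

type_synonym vname = string

datatype ty = IInt | TInt | TBool

definition is_int_ty :: "ty \<Rightarrow> bool" where
  "is_int_ty t \<longleftrightarrow> t = IInt \<or> t = TInt"

datatype val = VInt int | VBool bool

datatype op = Neg | Plus | Minus | Div | Mod | Size
  | Ge | Le | Gt | Lt | Eq | Neq | Not | And | Or

datatype expr =
    Var vname
  | Num nat
  | TrueC
  | FalseC
  | App op "expr list"
  | Paren expr

text \<open>For x e s represents for(x < size(e)) s: the loop bound is always size(e).\<close>
datatype stmt =
    Decl ty vname
  | Assign vname expr
  | Block "stmt list"
  | If expr stmt stmt
  | For vname expr stmt

definition size_int :: "int \<Rightarrow> nat" where
  "size_int v = nat \<lceil>log 2 (real_of_int \<bar>v\<bar> + 1)\<rceil>"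

fun sz_val :: "val \<Rightarrow> nat" where
  "sz_val (VInt v) = size_int v"
| "sz_val (VBool b) = 1"

type_synonym store = "vname \<Rightarrow> val option"
type_synonym tenv = "vname \<Rightarrow> ty option"

text \<open>Maximum size of a stored value, 0 for the empty store (stores are finite).\<close>
definition sz_store :: "store \<Rightarrow> nat" where
  "sz_store \<Sigma> = Max (insert 0 (sz_val ` ran \<Sigma>))"

definition domI :: "tenv \<Rightarrow> vname set" where
  "domI \<Gamma> = {x. \<Gamma> x = Some IInt}"

fun int_args :: "val list \<Rightarrow> int list option" where
  "int_args [] = Some []"
| "int_args (VInt a # vs) = map_option (Cons a) (int_args vs)"
| "int_args (VBool b # vs) = None"

fun bool_args :: "val list \<Rightarrow> bool list option" where
  "bool_args [] = Some []"
| "bool_args (VBool a # vs) = map_option (Cons a) (bool_args vs)"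
| "bool_args (VInt b # vs) = None"

definition apply_op :: "op \<Rightarrow> val list \<Rightarrow> val option" where
  "apply_op f vs =
    (case f of
       Neg \<Rightarrow> (case int_args vs of Some [a] \<Rightarrow> Some (VInt (- a)) | _ \<Rightarrow> None)
     | Size \<Rightarrow> (case int_args vs of Some [a] \<Rightarrow> Some (VInt (int (size_int a))) | _ \<Rightarrow> None)
     | Not \<Rightarrow> (case bool_args vs of Some [a] \<Rightarrow> Some (VBool (\<not> a)) | _ \<Rightarrow> None)
     | And \<Rightarrow> (case bool_args vs of Some [a, b] \<Rightarrow> Some (VBool (a \<and> b)) | _ \<Rightarrow> None)
     | Or \<Rightarrow> (case bool_args vs of Some [a, b] \<Rightarrow> Some (VBool (a \<or> b)) | _ \<Rightarrow> None)
     | _ \<Rightarrow> (case int_args vs of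
              Some [a, b] \<Rightarrow> Some (case f of
                  Plus \<Rightarrow> VInt (a + b)
                | Minus \<Rightarrow> VInt (a - b)
                | Div \<Rightarrow> VInt (if b = 0 then 0 else a div b)
                | Mod \<Rightarrow> VInt (if b = 0 then 0 else a mod b)
                | Ge \<Rightarrow> VBool (a \<ge> b)
                | Le \<Rightarrow> VBool (a \<le> b)
                | Gt \<Rightarrow> VBool (a > b)
                | Lt \<Rightarrow> VBool (a < b)
                | Eq \<Rightarrow> VBool (a = b)
                | _ \<Rightarrow> VBool (a \<noteq> b))
            | _ \<Rightarrow> None))"

inductive eval :: "store \<Rightarrow> expr \<Rightarrow> val \<Rightarrow> bool" where
  eval_Var: "\<Sigma> x = Some v \<Longrightarrow> eval \<Sigma> (Var x) v"
| eval_Num: "eval \<Sigma> (Num n) (VInt (int n))"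
| eval_True: "eval \<Sigma> TrueC (VBool True)"
| eval_False: "eval \<Sigma> FalseC (VBool False)"
| eval_App: "list_all2 (eval \<Sigma>) es vs \<Longrightarrow> apply_op f vs = Some v \<Longrightarrow> eval \<Sigma> (App f es) v"
| eval_Paren: "eval \<Sigma> e v \<Longrightarrow> eval \<Sigma> (Paren e) v"

inductive exec :: "store \<Rightarrow> stmt \<Rightarrow> store \<Rightarrow> bool"
  and exec_seq :: "store \<Rightarrow> stmt list \<Rightarrow> store \<Rightarrow> bool"
  and exec_loop :: "vname \<Rightarrow> stmt \<Rightarrow> int \<Rightarrow> int \<Rightarrow> store \<Rightarrow> store \<Rightarrow> bool"
where
  exec_DeclI: "is_int_ty t \<Longrightarrow> exec \<Sigma> (Decl t x) (\<Sigma>(x \<mapsto> VInt 0))"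
| exec_DeclB: "exec \<Sigma> (Decl TBool x) (\<Sigma>(x \<mapsto> VBool False))"
| exec_Assign: "x \<in> dom \<Sigma> \<Longrightarrow> eval \<Sigma> e v \<Longrightarrow> exec \<Sigma> (Assign x e) (\<Sigma>(x \<mapsto> v))"
| exec_Block: "exec_seq \<Sigma> ss \<Sigma>' \<Longrightarrow> exec \<Sigma> (Block ss) \<Sigma>'"
| exec_IfT: "eval \<Sigma> b (VBool True) \<Longrightarrow> exec \<Sigma> s1 \<Sigma>' \<Longrightarrow> exec \<Sigma> (If b s1 s2) \<Sigma>'"
| exec_IfF: "eval \<Sigma> b (VBool False) \<Longrightarrow> exec \<Sigma> s2 \<Sigma>' \<Longrightarrow> exec \<Sigma> (If b s1 s2) \<Sigma>'"
| exec_For: "eval \<Sigma> (App Size [e]) (VInt i) \<Longrightarrow> exec_loop x s i 0 \<Sigma> \<Sigma>'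
             \<Longrightarrow> exec \<Sigma> (For x e s) \<Sigma>'"
| exec_seq_Nil: "exec_seq \<Sigma> [] \<Sigma>"
| exec_seq_Cons: "exec \<Sigma> s \<Sigma>1 \<Longrightarrow> exec_seq \<Sigma>1 ss \<Sigma>' \<Longrightarrow> exec_seq \<Sigma> (s # ss) \<Sigma>'"
| exec_loop_done: "i \<le> j \<Longrightarrow> exec_loop x s i j \<Sigma> \<Sigma>"
| exec_loop_step: "j < i \<Longrightarrow> exec (\<Sigma>(x \<mapsto> VInt j)) s \<Sigma>1 \<Longrightarrow> exec_loop x s i (j + 1) \<Sigma>1 \<Sigma>'
             \<Longrightarrow> exec_loop x s i j \<Sigma> \<Sigma>'"

definition sup_int :: "ty list \<Rightarrow> ty" where
  "sup_int ts = (if (\<forall>t\<in>set ts. t = IInt) then IInt else TInt)"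

definition op_type :: "op \<Rightarrow> ty list \<Rightarrow> ty option" where
  "op_type f ts =
    (case f of
       Not \<Rightarrow> (if ts = [TBool] then Some TBool else None)
     | And \<Rightarrow> (if ts = [TBool, TBool] then Some TBool else None)
     | Or \<Rightarrow> (if ts = [TBool, TBool] then Some TBool else None)
     | Size \<Rightarrow> (if ts = [IInt] then Some IInt else None)
     | Neg \<Rightarrow> (if length ts = 1 \<and> (\<forall>t\<in>set ts. is_int_ty t) then Some (sup_int ts) else None)
     | _ \<Rightarrow>
        (if f \<in> {Plus, Minus, Div, Mod} then
           (if length ts = 2 \<and> (\<forall>t\<in>set ts. is_int_ty t) then Some (sup_int ts) else None)
         else
           (if length ts = 2 \<and> (\<forall>t\<in>set ts. is_int_ty t) then Some TBool else None)))"

inductive etype :: "tenv \<Rightarrow> bool \<Rightarrow> expr \<Rightarrow> ty \<Rightarrow> bool" where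
  ety_Var: "\<Gamma> x = Some t \<Longrightarrow> etype \<Gamma> l (Var x) t"
| ety_Num: "etype \<Gamma> l (Num n) IInt"
| ety_True: "etype \<Gamma> l TrueC TBool"
| ety_False: "etype \<Gamma> l FalseC TBool"
| ety_App: "list_all2 (etype \<Gamma> l) es ts \<Longrightarrow> op_type f ts = Some t \<Longrightarrow> etype \<Gamma> l (App f es) t"
| ety_Paren: "etype \<Gamma> l e t \<Longrightarrow> etype \<Gamma> l (Paren e) t"

definition compat_ty :: "ty \<Rightarrow> ty \<Rightarrow> bool" where
  "compat_ty t t' \<longleftrightarrow> (is_int_ty t \<and> is_int_ty t') \<or> (t = TBool \<and> t' = TBool)"

inductive stype :: "tenv \<Rightarrow> bool \<Rightarrow> stmt \<Rightarrow> tenv \<Rightarrow> bool"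
  and stype_seq :: "tenv \<Rightarrow> bool \<Rightarrow> stmt list \<Rightarrow> tenv \<Rightarrow> bool"
where
  sty_Decl: "x \<notin> dom \<Gamma> \<Longrightarrow> \<not> (l \<and> t = IInt) \<Longrightarrow> stype \<Gamma> l (Decl t x) (\<Gamma>(x \<mapsto> t))"
| sty_Assign: "\<Gamma> x = Some tx \<Longrightarrow> \<not> (l \<and> tx = IInt) \<Longrightarrow> etype \<Gamma> l e t \<Longrightarrow> compat_ty t tx
               \<Longrightarrow> stype \<Gamma> l (Assign x e) \<Gamma>"
| sty_Block: "stype_seq \<Gamma> l ss \<Gamma>' \<Longrightarrow> stype \<Gamma> l (Block ss) \<Gamma>"
| sty_If: "etype \<Gamma> l b TBool \<Longrightarrow> stype \<Gamma> l s1 \<Gamma>1 \<Longrightarrow> stype \<Gamma> l s2 \<Gamma>2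
           \<Longrightarrow> stype \<Gamma> l (If b s1 s2) \<Gamma>"
| sty_For: "etype \<Gamma> l (App Size [e]) IInt \<Longrightarrow> x \<notin> dom \<Gamma> \<Longrightarrow> stype (\<Gamma>(x \<mapsto> IInt)) True s \<Gamma>'
            \<Longrightarrow> stype \<Gamma> l (For x e s) \<Gamma>"
| sty_seq_Nil: "stype_seq \<Gamma> l [] \<Gamma>"
| sty_seq_Cons: "stype \<Gamma> l s \<Gamma>1 \<Longrightarrow> stype_seq \<Gamma>1 l ss \<Gamma>' \<Longrightarrow> stype_seq \<Gamma> l (s # ss) \<Gamma>'"

fun val_consistent :: "val \<Rightarrow> ty \<Rightarrow> bool" where
  "val_consistent (VInt v) t = is_int_ty t"
| "val_consistent (VBool b) t = (t = TBool)"

definition consistent :: "tenv \<Rightarrow> store \<Rightarrow> bool" where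
  "consistent \<Gamma> \<Sigma> \<longleftrightarrow> dom \<Gamma> \<subseteq> dom \<Sigma> \<and>
     (\<forall>x t v. \<Gamma> x = Some t \<longrightarrow> \<Sigma> x = Some v \<longrightarrow> val_consistent v t)"

end

theory Submission
  imports Defs
begin

text \<open>
  Every operator adds at most one bit to the size of its largest argument, so the value of an
  expression exceeds the sizes of the variables it reads by a constant depending only on the
  expression. Inside a loop body no \<open>iint\<close> variable can be declared or assigned, so the \<open>iint\<close>
  part of the store is frozen; as loop bounds are sizes of \<open>iint\<close> expressions, a loop runs at
  most \<open>m + c\<close> times, where \<open>m = sz(\<Sigma>|dom\<^sub>I \<Gamma>)\<close>, and induction on the statement shows that a
  loop body enlarges the store by at most \<open>C (m + 1)\<^sup>d\<close>. Outside loops this yields bounds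
  \<open>C (sz \<Sigma> + 1)\<^sup>d\<close> on the final store, which compose along a block by multiplying degrees;
  for a fixed statement they are absorbed into one degree, so \<open>k = 1\<close> suffices.
\<close>

section \<open>Sizes of integers\<close>

lemma size_int_le_iff: "size_int v \<le> n \<longleftrightarrow> \<bar>v\<bar> < 2 ^ n"
proof -
  have "size_int v \<le> n \<longleftrightarrow> log 2 (real_of_int \<bar>v\<bar> + 1) \<le> log 2 (2 ^ n)"
    unfolding size_int_def by (simp add: ceiling_le_iff nat_le_iff)
  also have "\<dots> \<longleftrightarrow> real_of_int (\<bar>v\<bar> + 1) \<le> real_of_int (2 ^ n)"
    by (subst log_le_cancel_iff) auto
  also have "\<dots> \<longleftrightarrow> \<bar>v\<bar> < 2 ^ n"
    by (subst of_int_le_iff) linarith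
  finally show ?thesis .
qed

lemma size_int_mono: "\<bar>a\<bar> \<le> \<bar>b\<bar> \<Longrightarrow> size_int a \<le> size_int b"
  using size_int_le_iff[of b "size_int b"] by (simp add: size_int_le_iff)

lemma size_int_0 [simp]: "size_int 0 = 0"
  by (simp add: size_int_def)

lemma size_int_uminus [simp]: "size_int (- a) = size_int a"
  by (simp add: size_int_def)

lemma size_int_of_nat_le: "size_int (int n) \<le> n"
  by (simp add: size_int_le_iff)

lemma size_int_add_le: "size_int (a + b) \<le> max (size_int a) (size_int b) + 1"
proof -
  let ?m = "max (size_int a) (size_int b)"
  have "\<bar>a\<bar> < 2 ^ ?m" "\<bar>b\<bar> < 2 ^ ?m"
    unfolding size_int_le_iff[symmetric] by simp_all
  then have "\<bar>a + b\<bar> < 2 ^ (?m + 1)" by simp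
  then show ?thesis by (simp only: size_int_le_iff)
qed

lemma size_int_diff_le: "size_int (a - b) \<le> max (size_int a) (size_int b) + 1"
  using size_int_add_le[of a "- b"] by simp

lemma abs_div_le_abs: "\<bar>a div b\<bar> \<le> \<bar>a :: int\<bar>"
proof -
  have pos: "\<bar>a div b\<bar> \<le> \<bar>a\<bar>" if "b > 0" for a b :: int
  proof (cases "a \<ge> 0")
    case True
    then show ?thesis using zdiv_mono2[of a 1 b] pos_imp_zdiv_nonneg_iff[of b a] that by simp
  next
    case False
    then show ?thesis using zdiv_mono2_neg[of a 1 b] div_neg_pos_less0[of a b] that by simp
  qed
  consider "b = 0" | "b > 0" | "b < 0" by linarith
  then show ?thesis
    by cases (use pos[of b a] pos[of "- b" "- a"] in auto)
qed

lemma size_int_div_le: "size_int (a div b) \<le> size_int a"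
  by (rule size_int_mono) (rule abs_div_le_abs)

lemma size_int_mod_le: "b \<noteq> 0 \<Longrightarrow> size_int (a mod b) \<le> size_int b"
  by (rule size_int_mono) (simp add: abs_mod_less order.strict_implies_order)

section \<open>Sizes of values computed by expressions\<close>

lemma int_args_eq_Some: "int_args vs = Some as \<Longrightarrow> vs = map VInt as"
  by (induction vs arbitrary: as rule: int_args.induct) auto

lemma apply_op_size_le:
  assumes "apply_op f vs = Some v" and "\<forall>w \<in> set vs. sz_val w \<le> B"
  shows "sz_val v \<le> B + 1"
proof -
  have args: "\<forall>a \<in> set as. size_int a \<le> B" if "int_args vs = Some as" for as
    using assms(2) int_args_eq_Some[OF that] by auto
  have "size_int (a + b) \<le> B + 1" "size_int (a - b) \<le> B + 1" "size_int (a div b) \<le> B + 1"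
    "size_int (int (size_int a)) \<le> B + 1" "b \<noteq> 0 \<Longrightarrow> size_int (a mod b) \<le> B + 1"
    if "size_int a \<le> B" "size_int b \<le> B" for a b
    using that size_int_add_le[of a b] size_int_diff_le[of a b] size_int_div_le[of a b]
      size_int_of_nat_le[of "size_int a"] size_int_mod_le[of b a] by auto
  with assms(1) args show ?thesis
    by (cases f) (auto simp: apply_op_def split: option.splits list.splits)
qed

fun expr_vars :: "expr \<Rightarrow> vname set" where
  "expr_vars (Var x) = {x}"
| "expr_vars (App f es) = (\<Union>e \<in> set es. expr_vars e)"
| "expr_vars (Paren e) = expr_vars e"
| "expr_vars (Num n) = {}"
| "expr_vars TrueC = {}"
| "expr_vars FalseC = {}"

fun expr_growth :: "expr \<Rightarrow> nat" where
  "expr_growth (Num n) = size_int (int n) + 1"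
| "expr_growth (App f es) = sum_list (map expr_growth es) + 1"
| "expr_growth (Paren e) = expr_growth e"
| "expr_growth (Var x) = 1"
| "expr_growth TrueC = 1"
| "expr_growth FalseC = 1"

lemma list_all2_set_right: "list_all2 P xs ys \<Longrightarrow> y \<in> set ys \<Longrightarrow> \<exists>x \<in> set xs. P x y"
  by (induction xs ys rule: list_all2_induct) auto

lemma list_all2_set_left: "list_all2 P xs ys \<Longrightarrow> x \<in> set xs \<Longrightarrow> \<exists>y \<in> set ys. P x y"
  by (induction xs ys rule: list_all2_induct) auto

lemma eval_size_le:
  "eval \<Sigma> e v \<Longrightarrow> (\<And>y w. y \<in> expr_vars e \<Longrightarrow> \<Sigma> y = Some w \<Longrightarrow> sz_val w \<le> M)
    \<Longrightarrow> sz_val v \<le> M + expr_growth e"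
proof (induction rule: eval.induct)
  case (eval_App \<Sigma> es vs f v)
  have "sz_val w \<le> M + sum_list (map expr_growth es)" if w: "w \<in> set vs" for w
  proof -
    obtain e where "e \<in> set es" and "sz_val w \<le> M + expr_growth e"
      using list_all2_set_right[OF eval_App.IH w] eval_App.prems by fastforce
    then show ?thesis using member_le_sum_list[of "expr_growth e" "map expr_growth es"] by simp
  qed
  with apply_op_size_le[OF \<open>apply_op f vs = Some v\<close>] show ?case by simp
qed (auto simp: le_SucI)

lemma etype_IInt_vars: "etype \<Gamma> l e t \<Longrightarrow> t = IInt \<Longrightarrow> y \<in> expr_vars e \<Longrightarrow> \<Gamma> y = Some IInt"
proof (induction rule: etype.induct)
  case (ety_App \<Gamma> l es ts f t)
  then obtain e where e: "e \<in> set es" "y \<in> expr_vars e" by auto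
  with list_all2_set_left[OF ety_App.IH] obtain t' where
    "t' \<in> set ts" and "t' = IInt \<longrightarrow> \<Gamma> y = Some IInt" by blast
  moreover have "t' = IInt"
    using \<open>t' \<in> set ts\<close> \<open>op_type f ts = Some t\<close> \<open>t = IInt\<close>
    by (cases f) (auto simp: op_type_def sup_int_def split: if_splits)
  ultimately show ?case by blast
qed auto

section \<open>Sizes of stores\<close>

lemma sz_val_le_sz_store: "finite (dom \<Sigma>) \<Longrightarrow> \<Sigma> x = Some v \<Longrightarrow> sz_val v \<le> sz_store \<Sigma>"
  unfolding sz_store_def by (intro Max_ge) (auto simp: finite_ran ranI)

lemma sz_store_leI:
  "finite (dom \<Sigma>) \<Longrightarrow> (\<And>x v. \<Sigma> x = Some v \<Longrightarrow> sz_val v \<le> B) \<Longrightarrow> sz_store \<Sigma> \<le> B"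
  unfolding sz_store_def by (subst Max_le_iff) (auto simp: finite_ran, auto simp: ran_def)

lemma sz_store_upd_le:
  "finite (dom \<Sigma>) \<Longrightarrow> sz_store (\<Sigma>(x \<mapsto> v)) \<le> max (sz_store \<Sigma>) (sz_val v)"
  by (rule sz_store_leI) (auto dest: sz_val_le_sz_store split: if_splits)

lemma sz_store_restrict_le: "finite (dom \<Sigma>) \<Longrightarrow> sz_store (\<Sigma> |` D) \<le> sz_store \<Sigma>"
  by (rule sz_store_leI) (auto dest: sz_val_le_sz_store ran_restrictD[OF ranI])

lemma eval_sz_store_le:
  "finite (dom \<Sigma>) \<Longrightarrow> eval \<Sigma> e v \<Longrightarrow> sz_val v \<le> sz_store \<Sigma> + expr_growth e"
  using eval_size_le sz_val_le_sz_store by blast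

lemma eval_IInt_sz_store_le:
  assumes "finite (dom \<Sigma>)" and "etype \<Gamma> l e IInt" and "eval \<Sigma> e v"
  shows "sz_val v \<le> sz_store (\<Sigma> |` domI \<Gamma>) + expr_growth e"
  using assms(3)
proof (rule eval_size_le)
  fix y w assume "y \<in> expr_vars e" and "\<Sigma> y = Some w"
  with assms(2) have "(\<Sigma> |` domI \<Gamma>) y = Some w"
    by (auto dest: etype_IInt_vars simp: domI_def)
  with assms(1) show "sz_val w \<le> sz_store (\<Sigma> |` domI \<Gamma>)"
    by (intro sz_val_le_sz_store) auto
qed

section \<open>Invariants of execution\<close>

inductive_cases stype_DeclE: "stype \<Gamma> l (Decl t x) \<Gamma>'"
inductive_cases stype_AssignE: "stype \<Gamma> l (Assign x e) \<Gamma>'"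
inductive_cases stype_BlockE: "stype \<Gamma> l (Block ss) \<Gamma>'"
inductive_cases stype_IfE: "stype \<Gamma> l (If b s1 s2) \<Gamma>'"
inductive_cases stype_ForE: "stype \<Gamma> l (For x e s) \<Gamma>'"
inductive_cases stype_seq_ConsE: "stype_seq \<Gamma> l (s # ss) \<Gamma>'"
inductive_cases etype_AppE: "etype \<Gamma> l (App f es) t"

inductive_cases exec_DeclE: "exec \<Sigma> (Decl t x) \<Sigma>'"
inductive_cases exec_AssignE: "exec \<Sigma> (Assign x e) \<Sigma>'"
inductive_cases exec_BlockE: "exec \<Sigma> (Block ss) \<Sigma>'"
inductive_cases exec_IfE: "exec \<Sigma> (If b s1 s2) \<Sigma>'"
inductive_cases exec_ForE: "exec \<Sigma> (For x e s) \<Sigma>'"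
inductive_cases exec_seq_NilE: "exec_seq \<Sigma> [] \<Sigma>'"
inductive_cases exec_seq_ConsE: "exec_seq \<Sigma> (s # ss) \<Sigma>'"
inductive_cases eval_AppE: "eval \<Sigma> (App f es) v"

lemma exec_loop_induct [consumes 1, case_names loop_done loop_step]:
  assumes "exec_loop x s i j \<Sigma> \<Sigma>'"
    and "\<And>j \<Sigma>. i \<le> j \<Longrightarrow> P j \<Sigma> \<Sigma>"
    and "\<And>j \<Sigma> \<Sigma>1 \<Sigma>'. j < i \<Longrightarrow> exec (\<Sigma>(x \<mapsto> VInt j)) s \<Sigma>1 \<Longrightarrow> exec_loop x s i (j + 1) \<Sigma>1 \<Sigma>'
      \<Longrightarrow> P (j + 1) \<Sigma>1 \<Sigma>' \<Longrightarrow> P j \<Sigma> \<Sigma>'"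
  shows "P j \<Sigma> \<Sigma>'"
  using assms
  by (induction x s i j \<Sigma> \<Sigma>' rule: exec_exec_seq_exec_loop.inducts(3)
      [where ?P1.0 = "\<lambda>_ _ _. True" and ?P2.0 = "\<lambda>_ _ _. True"]) auto

lemma restrict_map_eq_subset: "m |` A = m' |` A \<Longrightarrow> B \<subseteq> A \<Longrightarrow> m |` B = m' |` B"
  by (metis restrict_restrict Int_absorb1)

lemma exec_finite_dom:
  "exec \<Sigma> s \<Sigma>' \<Longrightarrow> finite (dom \<Sigma>) \<Longrightarrow> finite (dom \<Sigma>')"
  "exec_seq \<Sigma> ss \<Sigma>' \<Longrightarrow> finite (dom \<Sigma>) \<Longrightarrow> finite (dom \<Sigma>')"
  "exec_loop x s i j \<Sigma> \<Sigma>' \<Longrightarrow> finite (dom \<Sigma>) \<Longrightarrow> finite (dom \<Sigma>')"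
  by (induction rule: exec_exec_seq_exec_loop.inducts) auto

lemma domI_upd_IInt [simp]: "domI (\<Gamma>(x \<mapsto> IInt)) = insert x (domI \<Gamma>)"
  by (auto simp: domI_def)

lemma stype_in_loop_domI:
  "stype \<Gamma> l s \<Gamma>' \<Longrightarrow> l \<Longrightarrow> domI \<Gamma>' = domI \<Gamma>"
  "stype_seq \<Gamma> l ss \<Gamma>' \<Longrightarrow> l \<Longrightarrow> domI \<Gamma>' = domI \<Gamma>"
  by (induction rule: stype_stype_seq.inducts) (auto simp: domI_def)

lemma exec_in_loop_restrict_domI:
  "exec \<Sigma> s \<Sigma>' \<Longrightarrow> stype \<Gamma> True s \<Gamma>' \<Longrightarrow> \<Sigma>' |` domI \<Gamma> = \<Sigma> |` domI \<Gamma>"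
  "exec_seq \<Sigma> ss \<Sigma>' \<Longrightarrow> stype_seq \<Gamma> True ss \<Gamma>' \<Longrightarrow> \<Sigma>' |` domI \<Gamma> = \<Sigma> |` domI \<Gamma>"
  "exec_loop x s i j \<Sigma> \<Sigma>' \<Longrightarrow> stype (\<Gamma>(x \<mapsto> IInt)) True s \<Gamma>' \<Longrightarrow> x \<notin> dom \<Gamma>
    \<Longrightarrow> \<Sigma>' |` domI \<Gamma> = \<Sigma> |` domI \<Gamma>"
proof (induction arbitrary: \<Gamma> \<Gamma>' and \<Gamma> \<Gamma>' and \<Gamma> \<Gamma>' rule: exec_exec_seq_exec_loop.inducts)
  case (exec_DeclI t \<Sigma> x)
  then have "x \<notin> domI \<Gamma>" by (auto elim!: stype_DeclE simp: domI_def)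
  then show ?case by (simp add: restrict_map_def fun_eq_iff)
next
  case (exec_DeclB \<Sigma> x)
  then have "x \<notin> domI \<Gamma>" by (auto elim!: stype_DeclE simp: domI_def)
  then show ?case by (simp add: restrict_map_def fun_eq_iff)
next
  case (exec_Assign x \<Sigma> e v)
  then have "x \<notin> domI \<Gamma>" by (auto elim!: stype_AssignE simp: domI_def)
  then show ?case by (simp add: restrict_map_def fun_eq_iff)
next
  case (exec_For \<Sigma> e i x s \<Sigma>')
  from \<open>stype \<Gamma> True (For x e s) \<Gamma>'\<close> obtain \<Gamma>b
    where "stype (\<Gamma>(x \<mapsto> IInt)) True s \<Gamma>b" and "x \<notin> dom \<Gamma>"
    by (rule stype_ForE)
  with exec_For.IH show ?case by (simp add: fun_upd_def)
next
  case (exec_seq_Cons \<Sigma> s \<Sigma>1 ss \<Sigma>')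
  from \<open>stype_seq \<Gamma> True (s # ss) \<Gamma>'\<close> obtain \<Gamma>1
    where "stype \<Gamma> True s \<Gamma>1" and "stype_seq \<Gamma>1 True ss \<Gamma>'"
    by (rule stype_seq_ConsE)
  with exec_seq_Cons.IH stype_in_loop_domI(1) show ?case by metis
next
  case (exec_loop_step j i \<Sigma> x s \<Sigma>1 \<Sigma>')
  have "\<Sigma>1 |` domI (\<Gamma>(x \<mapsto> IInt)) = \<Sigma>(x \<mapsto> VInt j) |` domI (\<Gamma>(x \<mapsto> IInt))"
    using exec_loop_step.IH(1) exec_loop_step.prems(1) by blast
  then have "\<Sigma>1 |` domI \<Gamma> = \<Sigma>(x \<mapsto> VInt j) |` domI \<Gamma>"
    by (rule restrict_map_eq_subset) auto
  moreover have "x \<notin> domI \<Gamma>"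
    using exec_loop_step.prems(2) by (auto simp: domI_def)
  ultimately show ?case
    using exec_loop_step.IH(2) exec_loop_step.prems by simp
qed (auto elim!: stype_BlockE stype_IfE)

section \<open>Polynomial bounds\<close>

lemma poly_bound_mono:
  "(C :: nat) \<le> C' \<Longrightarrow> d \<le> d' \<Longrightarrow> C * (m + 1) ^ d \<le> C' * (m + 1) ^ d'"
  by (intro mult_mono power_increasing) auto

lemma poly_bound_add:
  "(C1 :: nat) * (m + 1) ^ d1 + C2 * (m + 1) ^ d2 \<le> (C1 + C2) * (m + 1) ^ max d1 d2"
  unfolding distrib_right by (intro add_mono poly_bound_mono) auto

lemma poly_bound_compose:
  assumes "(x :: nat) \<le> P * (n + 1) ^ p"
  shows "Q * (x + 1) ^ q \<le> Q * (P + 1) ^ q * (n + 1) ^ (p * q)"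
proof -
  have "1 \<le> (n + 1) ^ p" by simp
  with assms have "x + 1 \<le> (P + 1) * (n + 1) ^ p"
    unfolding distrib_right by linarith
  then have "(x + 1) ^ q \<le> ((P + 1) * (n + 1) ^ p) ^ q"
    by (rule power_mono) simp
  also have "\<dots> = (P + 1) ^ q * (n + 1) ^ (p * q)"
    by (simp only: power_mult_distrib power_mult)
  finally show ?thesis by (simp add: mult.assoc)
qed

lemma iterated_poly_bound_le:
  "(K :: nat) * (K + C * (K + 1) ^ d) \<le> (1 + C) * (K + 1) ^ (d + 2)"
proof -
  have "K + 1 \<le> (K + 1) ^ (d + 1)" by (rule self_le_power) simp_all
  then have "K \<le> (K + 1) ^ (d + 1)" by linarith
  moreover have "(K + 1) ^ d \<le> (K + 1) ^ (d + 1)" by (rule power_increasing) simp_all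
  ultimately have "K + C * (K + 1) ^ d \<le> (1 + C) * (K + 1) ^ (d + 1)"
    unfolding distrib_right by (simp add: add_mono)
  then have "K * (K + C * (K + 1) ^ d) \<le> (K + 1) * ((1 + C) * (K + 1) ^ (d + 1))"
    by (intro mult_mono) auto
  then show ?thesis by (simp add: algebra_simps)
qed

lemma add_poly_bound_le:
  assumes "m \<le> n" and "0 < D"
  shows "n + C * (m + 1) ^ D \<le> (1 + C) * ((n :: nat) + 1) ^ D"
proof -
  have "n + 1 \<le> (n + 1) ^ D"
    using \<open>0 < D\<close> by (intro self_le_power) auto
  moreover have "C * (m + 1) ^ D \<le> C * (n + 1) ^ D"
    using \<open>m \<le> n\<close> by (simp add: power_mono)
  ultimately have "n + C * (m + 1) ^ D \<le> (n + 1) ^ D + C * (n + 1) ^ D"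
    by linarith
  then show ?thesis by (simp only: distrib_right mult_1)
qed

lemma poly_bound_le_two_power:
  assumes "(C :: nat) \<le> C'" and "d \<le> D"
  shows "C * (m + 1) ^ d \<le> C' * 2 ^ D * (m ^ D + 1)"
proof -
  have two_power: "(m + 1) ^ D \<le> 2 ^ D * (m ^ D + 1)"
  proof (cases "m = 0")
    case False
    then have "(m + 1) ^ D \<le> (2 * m) ^ D" by (intro power_mono) auto
    then show ?thesis by (simp add: power_mult_distrib distrib_left)
  qed (simp add: trans_le_add1)
  have "C * (m + 1) ^ d \<le> C' * (m + 1) ^ D"
    using assms by (rule poly_bound_mono)
  also have "\<dots> \<le> C' * (2 ^ D * (m ^ D + 1))"
    using two_power by (rule mult_le_mono2)
  finally show ?thesis by (simp only: mult.assoc)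
qed

section \<open>Growth of the store under execution\<close>

definition growth_in_loop :: "stmt \<Rightarrow> nat \<Rightarrow> nat \<Rightarrow> bool" where
  "growth_in_loop s C d \<longleftrightarrow> (\<forall>\<Gamma> \<Gamma>' \<Sigma> \<Sigma>'. finite (dom \<Sigma>) \<longrightarrow> stype \<Gamma> True s \<Gamma>' \<longrightarrow> exec \<Sigma> s \<Sigma>' \<longrightarrow>
     sz_store \<Sigma>' \<le> sz_store \<Sigma> + C * (sz_store (\<Sigma> |` domI \<Gamma>) + 1) ^ d)"

definition growth_outside_loop :: "stmt \<Rightarrow> nat \<Rightarrow> nat \<Rightarrow> bool" where
  "growth_outside_loop s C d \<longleftrightarrow> (\<forall>\<Gamma> \<Gamma>' \<Sigma> \<Sigma>'. finite (dom \<Sigma>) \<longrightarrow> stype \<Gamma> False s \<Gamma>' \<longrightarrow> exec \<Sigma> s \<Sigma>' \<longrightarrow>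
     sz_store \<Sigma>' \<le> C * (sz_store \<Sigma> + 1) ^ d)"

lemma growth_in_loopI:
  "(\<And>\<Gamma> \<Gamma>' \<Sigma> \<Sigma>'. finite (dom \<Sigma>) \<Longrightarrow> stype \<Gamma> True s \<Gamma>' \<Longrightarrow> exec \<Sigma> s \<Sigma>' \<Longrightarrow>
     sz_store \<Sigma>' \<le> sz_store \<Sigma> + C * (sz_store (\<Sigma> |` domI \<Gamma>) + 1) ^ d) \<Longrightarrow> growth_in_loop s C d"
  unfolding growth_in_loop_def by blast

lemma growth_in_loopD:
  "growth_in_loop s C d \<Longrightarrow> finite (dom \<Sigma>) \<Longrightarrow> stype \<Gamma> True s \<Gamma>' \<Longrightarrow> exec \<Sigma> s \<Sigma>' \<Longrightarrow>
     sz_store \<Sigma>' \<le> sz_store \<Sigma> + C * (sz_store (\<Sigma> |` domI \<Gamma>) + 1) ^ d"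
  unfolding growth_in_loop_def by blast

lemma growth_outside_loopI:
  "(\<And>\<Gamma> \<Gamma>' \<Sigma> \<Sigma>'. finite (dom \<Sigma>) \<Longrightarrow> stype \<Gamma> False s \<Gamma>' \<Longrightarrow> exec \<Sigma> s \<Sigma>' \<Longrightarrow>
     sz_store \<Sigma>' \<le> C * (sz_store \<Sigma> + 1) ^ d) \<Longrightarrow> growth_outside_loop s C d"
  unfolding growth_outside_loop_def by blast

lemma growth_outside_loopD:
  "growth_outside_loop s C d \<Longrightarrow> finite (dom \<Sigma>) \<Longrightarrow> stype \<Gamma> False s \<Gamma>' \<Longrightarrow> exec \<Sigma> s \<Sigma>' \<Longrightarrow>
     sz_store \<Sigma>' \<le> C * (sz_store \<Sigma> + 1) ^ d"
  unfolding growth_outside_loop_def by blast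

lemma growth_of_additive_bound:
  assumes "\<And>\<Sigma> \<Sigma>'. finite (dom \<Sigma>) \<Longrightarrow> exec \<Sigma> s \<Sigma>' \<Longrightarrow> sz_store \<Sigma>' \<le> sz_store \<Sigma> + c"
  shows "growth_in_loop s c 0" and "growth_outside_loop s (1 + c) 1"
proof -
  show "growth_in_loop s c 0"
    using assms by (intro growth_in_loopI) simp
  show "growth_outside_loop s (1 + c) 1"
  proof (rule growth_outside_loopI)
    fix \<Gamma> \<Gamma>' \<Sigma> \<Sigma>' assume "finite (dom \<Sigma>)" and "exec \<Sigma> s \<Sigma>'"
    then have "sz_store \<Sigma>' \<le> sz_store \<Sigma> + c * (0 + 1) ^ 1" using assms by simp
    also have "\<dots> \<le> (1 + c) * (sz_store \<Sigma> + 1) ^ 1" by (rule add_poly_bound_le) auto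
    finally show "sz_store \<Sigma>' \<le> (1 + c) * (sz_store \<Sigma> + 1) ^ 1" .
  qed
qed

lemma exec_Decl_sz_store_le:
  assumes "finite (dom \<Sigma>)" and "exec \<Sigma> (Decl t x) \<Sigma>'"
  shows "sz_store \<Sigma>' \<le> sz_store \<Sigma> + 1"
proof -
  from assms(2) obtain v where "\<Sigma>' = \<Sigma>(x \<mapsto> v)" and "sz_val v \<le> 1"
    by (cases rule: exec_DeclE) auto
  with sz_store_upd_le[OF assms(1), of x v] show ?thesis by auto
qed

lemma exec_Assign_sz_store_le:
  assumes "finite (dom \<Sigma>)" and "exec \<Sigma> (Assign x e) \<Sigma>'"
  shows "sz_store \<Sigma>' \<le> sz_store \<Sigma> + expr_growth e"
proof -
  from assms(2) obtain v where "\<Sigma>' = \<Sigma>(x \<mapsto> v)" and "eval \<Sigma> e v"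
    by (cases rule: exec_AssignE) auto
  with sz_store_upd_le[OF assms(1), of x v] eval_sz_store_le[OF assms(1)] show ?thesis by force
qed

lemma stype_exec_IfE:
  assumes "stype \<Gamma> l (If b s1 s2) \<Gamma>'" and "exec \<Sigma> (If b s1 s2) \<Sigma>'"
  obtains (then_branch) \<Gamma>1 where "stype \<Gamma> l s1 \<Gamma>1" and "exec \<Sigma> s1 \<Sigma>'"
    | (else_branch) \<Gamma>2 where "stype \<Gamma> l s2 \<Gamma>2" and "exec \<Sigma> s2 \<Sigma>'"
  using assms by (blast elim: stype_IfE exec_IfE)

lemma growth_in_loop_If:
  assumes "growth_in_loop s1 C1 d1" and "growth_in_loop s2 C2 d2"
  shows "growth_in_loop (If b s1 s2) (C1 + C2) (max d1 d2)"
proof (rule growth_in_loopI)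
  fix \<Gamma> \<Gamma>' \<Sigma> \<Sigma>'
  assume fin: "finite (dom \<Sigma>)" and "stype \<Gamma> True (If b s1 s2) \<Gamma>'" and "exec \<Sigma> (If b s1 s2) \<Sigma>'"
  let ?m = "sz_store (\<Sigma> |` domI \<Gamma>)"
  from \<open>stype \<Gamma> True (If b s1 s2) \<Gamma>'\<close> \<open>exec \<Sigma> (If b s1 s2) \<Sigma>'\<close>
  show "sz_store \<Sigma>' \<le> sz_store \<Sigma> + (C1 + C2) * (?m + 1) ^ max d1 d2"
  proof (cases rule: stype_exec_IfE)
    case then_branch
    with growth_in_loopD[OF assms(1) fin] poly_bound_mono[of C1 "C1 + C2" d1 "max d1 d2" ?m]
    show ?thesis by fastforce
  next
    case else_branch
    with growth_in_loopD[OF assms(2) fin] poly_bound_mono[of C2 "C1 + C2" d2 "max d1 d2" ?m]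
    show ?thesis by fastforce
  qed
qed

lemma growth_outside_loop_If:
  assumes "growth_outside_loop s1 C1 d1" and "growth_outside_loop s2 C2 d2"
  shows "growth_outside_loop (If b s1 s2) (C1 + C2) (max d1 d2)"
proof (rule growth_outside_loopI)
  fix \<Gamma> \<Gamma>' \<Sigma> \<Sigma>'
  assume fin: "finite (dom \<Sigma>)" and "stype \<Gamma> False (If b s1 s2) \<Gamma>'" and "exec \<Sigma> (If b s1 s2) \<Sigma>'"
  let ?n = "sz_store \<Sigma>"
  from \<open>stype \<Gamma> False (If b s1 s2) \<Gamma>'\<close> \<open>exec \<Sigma> (If b s1 s2) \<Sigma>'\<close>
  show "sz_store \<Sigma>' \<le> (C1 + C2) * (?n + 1) ^ max d1 d2"
  proof (cases rule: stype_exec_IfE)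
    case then_branch
    with growth_outside_loopD[OF assms(1) fin] poly_bound_mono[of C1 "C1 + C2" d1 "max d1 d2" ?n]
    show ?thesis by fastforce
  next
    case else_branch
    with growth_outside_loopD[OF assms(2) fin] poly_bound_mono[of C2 "C1 + C2" d2 "max d1 d2" ?n]
    show ?thesis by fastforce
  qed
qed

lemma stype_exec_Block_ConsE:
  assumes "stype \<Gamma> l (Block (s # ss)) \<Gamma>'" and "exec \<Sigma> (Block (s # ss)) \<Sigma>'"
  obtains \<Gamma>1 \<Sigma>1 where "stype \<Gamma> l s \<Gamma>1" and "exec \<Sigma> s \<Sigma>1"
    and "stype \<Gamma>1 l (Block ss) \<Gamma>1" and "exec \<Sigma>1 (Block ss) \<Sigma>'"
proof -
  from assms(1) obtain \<Gamma>1 \<Gamma>2 where "stype \<Gamma> l s \<Gamma>1" and "stype_seq \<Gamma>1 l ss \<Gamma>2"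
    by (blast elim: stype_BlockE stype_seq_ConsE)
  moreover from assms(2) obtain \<Sigma>1 where "exec \<Sigma> s \<Sigma>1" and "exec_seq \<Sigma>1 ss \<Sigma>'"
    by (blast elim: exec_BlockE exec_seq_ConsE)
  ultimately show thesis using that sty_Block exec_Block by blast
qed

lemma growth_in_loop_Block_Cons:
  assumes "growth_in_loop s C1 d1" and "growth_in_loop (Block ss) C2 d2"
  shows "growth_in_loop (Block (s # ss)) (C1 + C2) (max d1 d2)"
proof (rule growth_in_loopI)
  fix \<Gamma> \<Gamma>' \<Sigma> \<Sigma>'
  assume fin: "finite (dom \<Sigma>)"
    and "stype \<Gamma> True (Block (s # ss)) \<Gamma>'" and "exec \<Sigma> (Block (s # ss)) \<Sigma>'"
  from this(2,3) obtain \<Gamma>1 \<Sigma>1 where s: "stype \<Gamma> True s \<Gamma>1" "exec \<Sigma> s \<Sigma>1"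
    and ss: "stype \<Gamma>1 True (Block ss) \<Gamma>1" "exec \<Sigma>1 (Block ss) \<Sigma>'"
    by (rule stype_exec_Block_ConsE)
  let ?m = "sz_store (\<Sigma> |` domI \<Gamma>)"
  have "\<Sigma>1 |` domI \<Gamma>1 = \<Sigma> |` domI \<Gamma>"
    using exec_in_loop_restrict_domI(1)[OF s(2,1)] stype_in_loop_domI(1)[OF s(1)] by simp
  then have "sz_store \<Sigma>' \<le> sz_store \<Sigma>1 + C2 * (?m + 1) ^ d2"
    using growth_in_loopD[OF assms(2) exec_finite_dom(1)[OF s(2) fin] ss] by simp
  moreover have "sz_store \<Sigma>1 \<le> sz_store \<Sigma> + C1 * (?m + 1) ^ d1"
    using growth_in_loopD[OF assms(1) fin s] .
  ultimately show "sz_store \<Sigma>' \<le> sz_store \<Sigma> + (C1 + C2) * (?m + 1) ^ max d1 d2"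
    using poly_bound_add[of C1 ?m d1 C2 d2] by linarith
qed

lemma growth_outside_loop_Block_Cons:
  assumes "growth_outside_loop s C1 d1" and "growth_outside_loop (Block ss) C2 d2"
  shows "growth_outside_loop (Block (s # ss)) (C2 * (C1 + 1) ^ d2) (d1 * d2)"
proof (rule growth_outside_loopI)
  fix \<Gamma> \<Gamma>' \<Sigma> \<Sigma>'
  assume fin: "finite (dom \<Sigma>)"
    and "stype \<Gamma> False (Block (s # ss)) \<Gamma>'" and "exec \<Sigma> (Block (s # ss)) \<Sigma>'"
  from this(2,3) obtain \<Gamma>1 \<Sigma>1 where s: "stype \<Gamma> False s \<Gamma>1" "exec \<Sigma> s \<Sigma>1"
    and ss: "stype \<Gamma>1 False (Block ss) \<Gamma>1" "exec \<Sigma>1 (Block ss) \<Sigma>'"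
    by (rule stype_exec_Block_ConsE)
  have "sz_store \<Sigma>' \<le> C2 * (sz_store \<Sigma>1 + 1) ^ d2"
    using growth_outside_loopD[OF assms(2) exec_finite_dom(1)[OF s(2) fin] ss] .
  also have "\<dots> \<le> C2 * (C1 + 1) ^ d2 * (sz_store \<Sigma> + 1) ^ (d1 * d2)"
    using growth_outside_loopD[OF assms(1) fin s] by (rule poly_bound_compose)
  finally show "sz_store \<Sigma>' \<le> C2 * (C1 + 1) ^ d2 * (sz_store \<Sigma> + 1) ^ (d1 * d2)" .
qed

lemma growth_Block:
  assumes "\<forall>s \<in> set ss. (\<exists>C d. growth_in_loop s C d) \<and> (\<exists>C d. growth_outside_loop s C d)"
  shows "(\<exists>C d. growth_in_loop (Block ss) C d) \<and> (\<exists>C d. growth_outside_loop (Block ss) C d)"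
  using assms
proof (induction ss)
  case Nil
  have "exec \<Sigma> (Block []) \<Sigma>' \<Longrightarrow> sz_store \<Sigma>' \<le> sz_store \<Sigma> + 0" for \<Sigma> \<Sigma>'
    by (auto elim: exec_BlockE exec_seq_NilE)
  then show ?case using growth_of_additive_bound by blast
next
  case (Cons s ss)
  then obtain C1 d1 E1 e1 C2 d2 E2 e2
    where "growth_in_loop s C1 d1" and "growth_outside_loop s E1 e1"
      and "growth_in_loop (Block ss) C2 d2" and "growth_outside_loop (Block ss) E2 e2"
    by auto
  then show ?case using growth_in_loop_Block_Cons growth_outside_loop_Block_Cons by blast
qed

lemma eval_SizeE:
  assumes "eval \<Sigma> (App Size [e]) v"
  obtains a where "eval \<Sigma> e (VInt a)" and "v = VInt (int (size_int a))"
proof -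
  from assms obtain w where "eval \<Sigma> e w" and op: "apply_op Size [w] = Some v"
    by (auto elim!: eval_AppE simp: list_all2_Cons1)
  moreover from op obtain a where "w = VInt a" and "v = VInt (int (size_int a))"
    by (cases w) (simp_all add: apply_op_def)
  ultimately show thesis using that by blast
qed

lemma etype_SizeD: "etype \<Gamma> l (App Size [e]) t \<Longrightarrow> etype \<Gamma> l e IInt"
  by (auto elim!: etype_AppE simp: op_type_def list_all2_Cons1 split: if_splits)

lemma exec_loop_growth:
  assumes "exec_loop x s i j \<Sigma> \<Sigma>'" and "P \<Sigma>"
    and "\<And>k \<Sigma> \<Sigma>1. j \<le> k \<Longrightarrow> k < i \<Longrightarrow> P \<Sigma> \<Longrightarrow> exec (\<Sigma>(x \<mapsto> VInt k)) s \<Sigma>1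
      \<Longrightarrow> P \<Sigma>1 \<and> f \<Sigma>1 \<le> f \<Sigma> + B"
  shows "f \<Sigma>' \<le> f \<Sigma> + nat (i - j) * B"
  using assms
proof (induction rule: exec_loop_induct)
  case (loop_step j \<Sigma> \<Sigma>1 \<Sigma>')
  from loop_step.prems(2)[OF order.refl \<open>j < i\<close> loop_step.prems(1) loop_step.hyps(2)]
  have "P \<Sigma>1" and "f \<Sigma>1 \<le> f \<Sigma> + B" by blast+
  moreover have "f \<Sigma>' \<le> f \<Sigma>1 + nat (i - (j + 1)) * B"
  proof (rule loop_step.IH[OF \<open>P \<Sigma>1\<close>])
    fix k \<Sigma>a \<Sigma>b
    assume "j + 1 \<le> k" and "k < i" and "P \<Sigma>a" and "exec (\<Sigma>a(x \<mapsto> VInt k)) s \<Sigma>b"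
    moreover from \<open>j + 1 \<le> k\<close> have "j \<le> k" by linarith
    ultimately show "P \<Sigma>b \<and> f \<Sigma>b \<le> f \<Sigma>a + B" using loop_step.prems(2) by blast
  qed
  moreover have "nat (i - j) = nat (i - (j + 1)) + 1"
    using \<open>j < i\<close> by simp
  ultimately show ?case by simp
qed simp

lemma for_iteration_sz_store_le:
  assumes body: "growth_in_loop s C d" and sb: "stype (\<Gamma>(x \<mapsto> IInt)) True s \<Gamma>b"
    and x: "x \<notin> dom \<Gamma>" and fin: "finite (dom \<Sigma>)" and ex: "exec (\<Sigma>(x \<mapsto> VInt k)) s \<Sigma>1"
    and m: "sz_store (\<Sigma> |` domI \<Gamma>) \<le> K" and k: "size_int k \<le> K"
  shows "\<Sigma>1 |` domI \<Gamma> = \<Sigma> |` domI \<Gamma>" and "sz_store \<Sigma>1 \<le> sz_store \<Sigma> + (K + C * (K + 1) ^ d)"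
proof -
  let ?\<Sigma>x = "\<Sigma>(x \<mapsto> VInt k)"
  have "x \<notin> domI \<Gamma>" using x by (auto simp: domI_def)
  have "\<Sigma>1 |` domI (\<Gamma>(x \<mapsto> IInt)) = ?\<Sigma>x |` domI (\<Gamma>(x \<mapsto> IInt))"
    by (rule exec_in_loop_restrict_domI(1)[OF ex sb])
  then have "\<Sigma>1 |` domI \<Gamma> = ?\<Sigma>x |` domI \<Gamma>"
    by (rule restrict_map_eq_subset) auto
  with \<open>x \<notin> domI \<Gamma>\<close> show "\<Sigma>1 |` domI \<Gamma> = \<Sigma> |` domI \<Gamma>" by simp
  have "?\<Sigma>x |` domI (\<Gamma>(x \<mapsto> IInt)) = (\<Sigma> |` domI \<Gamma>)(x \<mapsto> VInt k)"
    using \<open>x \<notin> domI \<Gamma>\<close> by simp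
  then have "sz_store (?\<Sigma>x |` domI (\<Gamma>(x \<mapsto> IInt))) \<le> K"
    using sz_store_upd_le[of "\<Sigma> |` domI \<Gamma>" x "VInt k"] fin m k by simp
  then have "C * (sz_store (?\<Sigma>x |` domI (\<Gamma>(x \<mapsto> IInt))) + 1) ^ d \<le> C * (K + 1) ^ d"
    by (simp add: power_mono)
  moreover have "sz_store \<Sigma>1 \<le> sz_store ?\<Sigma>x + C * (sz_store (?\<Sigma>x |` domI (\<Gamma>(x \<mapsto> IInt))) + 1) ^ d"
    using fin by (intro growth_in_loopD[OF body _ sb ex]) simp
  moreover have "sz_store ?\<Sigma>x \<le> sz_store \<Sigma> + K"
    using sz_store_upd_le[OF fin, of x "VInt k"] k by simp
  ultimately show "sz_store \<Sigma>1 \<le> sz_store \<Sigma> + (K + C * (K + 1) ^ d)" by linarith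
qed

lemma exec_For_sz_store_le:
  assumes body: "growth_in_loop s C d" and typing: "stype \<Gamma> l (For x e s) \<Gamma>'"
    and ex: "exec \<Sigma> (For x e s) \<Sigma>'" and fin: "finite (dom \<Sigma>)"
  shows "sz_store \<Sigma>' \<le> sz_store \<Sigma>
    + (1 + C) * (expr_growth e + 1) ^ (d + 2) * (sz_store (\<Sigma> |` domI \<Gamma>) + 1) ^ (d + 2)"
proof -
  define m where "m = sz_store (\<Sigma> |` domI \<Gamma>)"
  define K where "K = m + expr_growth e"
  from typing obtain \<Gamma>b where ety: "etype \<Gamma> l (App Size [e]) IInt" and x: "x \<notin> dom \<Gamma>"
    and sb: "stype (\<Gamma>(x \<mapsto> IInt)) True s \<Gamma>b"
    by (rule stype_ForE)
  from ex obtain a where ev: "eval \<Sigma> e (VInt a)" and loop: "exec_loop x s (int (size_int a)) 0 \<Sigma> \<Sigma>'"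
    by (blast elim: exec_ForE eval_SizeE)
  have "size_int a \<le> K"
    using eval_IInt_sz_store_le[OF fin etype_SizeD[OF ety] ev] by (simp add: K_def m_def)
  let ?inv = "\<lambda>\<Sigma>1. finite (dom \<Sigma>1) \<and> \<Sigma>1 |` domI \<Gamma> = \<Sigma> |` domI \<Gamma>"
  have iterations: "sz_store \<Sigma>' \<le> sz_store \<Sigma> + nat (int (size_int a) - 0) * (K + C * (K + 1) ^ d)"
    using loop
  proof (rule exec_loop_growth[where P = ?inv])
    show "?inv \<Sigma>" using fin by simp
    fix k \<Sigma>k \<Sigma>1
    assume k: "0 \<le> k" "k < int (size_int a)" and inv: "?inv \<Sigma>k"
      and ex1: "exec (\<Sigma>k(x \<mapsto> VInt k)) s \<Sigma>1"
    have "size_int k \<le> nat k"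
      using size_int_of_nat_le[of "nat k"] k(1) by simp
    also have "\<dots> \<le> K" using k(2) \<open>size_int a \<le> K\<close> by linarith
    finally have "size_int k \<le> K" .
    moreover have "sz_store (\<Sigma>k |` domI \<Gamma>) \<le> K" using inv by (simp add: K_def m_def)
    ultimately show "?inv \<Sigma>1 \<and> sz_store \<Sigma>1 \<le> sz_store \<Sigma>k + (K + C * (K + 1) ^ d)"
      using for_iteration_sz_store_le[OF body sb x _ ex1] exec_finite_dom(1)[OF ex1] inv by simp
  qed
  have "nat (int (size_int a) - 0) * (K + C * (K + 1) ^ d) \<le> K * (K + C * (K + 1) ^ d)"
    using \<open>size_int a \<le> K\<close> by simp
  also have "\<dots> \<le> (1 + C) * (K + 1) ^ (d + 2)"
    by (rule iterated_poly_bound_le)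
  also have "\<dots> \<le> (1 + C) * ((expr_growth e + 1) * (m + 1)) ^ (d + 2)"
    unfolding K_def by (intro mult_le_mono2 power_mono) simp_all
  also have "\<dots> = (1 + C) * (expr_growth e + 1) ^ (d + 2) * (m + 1) ^ (d + 2)"
    by (simp only: power_mult_distrib mult.assoc)
  finally show ?thesis
    using order_trans[OF iterations add_left_mono] unfolding m_def by blast
qed

lemma growth_in_loop_For:
  assumes "growth_in_loop s C d"
  shows "growth_in_loop (For x e s) ((1 + C) * (expr_growth e + 1) ^ (d + 2)) (d + 2)"
  using exec_For_sz_store_le[OF assms] by (intro growth_in_loopI) blast

lemma growth_outside_loop_For:
  assumes "growth_in_loop s C d"
  shows "growth_outside_loop (For x e s) (1 + (1 + C) * (expr_growth e + 1) ^ (d + 2)) (d + 2)"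
proof (rule growth_outside_loopI)
  fix \<Gamma> \<Gamma>' \<Sigma> \<Sigma>'
  assume fin: "finite (dom \<Sigma>)" and "stype \<Gamma> False (For x e s) \<Gamma>'" and "exec \<Sigma> (For x e s) \<Sigma>'"
  let ?C = "(1 + C) * (expr_growth e + 1) ^ (d + 2)"
  have "sz_store \<Sigma>' \<le> sz_store \<Sigma> + ?C * (sz_store (\<Sigma> |` domI \<Gamma>) + 1) ^ (d + 2)"
    by (rule exec_For_sz_store_le) fact+
  also have "\<dots> \<le> (1 + ?C) * (sz_store \<Sigma> + 1) ^ (d + 2)"
    using sz_store_restrict_le[OF fin] by (rule add_poly_bound_le) simp
  finally show "sz_store \<Sigma>' \<le> (1 + ?C) * (sz_store \<Sigma> + 1) ^ (d + 2)" .
qed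

lemma stmt_growth: "(\<exists>C d. growth_in_loop s C d) \<and> (\<exists>C d. growth_outside_loop s C d)"
proof (induction s)
  case (Decl t x)
  then show ?case using growth_of_additive_bound exec_Decl_sz_store_le by blast
next
  case (Assign x e)
  then show ?case using growth_of_additive_bound exec_Assign_sz_store_le by blast
next
  case (Block ss)
  then show ?case by (intro growth_Block) blast
next
  case (If b s1 s2)
  then show ?case using growth_in_loop_If growth_outside_loop_If by meson
next
  case (For x e s)
  then show ?case using growth_in_loop_For growth_outside_loop_For by blast
qed

theorem lemma7:
  fixes s :: stmt and l :: bool
  shows "\<exists>C d k :: nat. \<forall>\<Gamma> \<Sigma> \<Gamma>' \<Sigma>'.
           finite (dom \<Sigma>) \<and> consistent \<Gamma> \<Sigma> \<and> stype \<Gamma> l s \<Gamma>' \<and> exec \<Sigma> s \<Sigma>' \<longrightarrow>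
             (l \<longrightarrow> sz_store \<Sigma>' - sz_store \<Sigma> \<le> C * (sz_store (\<Sigma> |` domI \<Gamma>) ^ d + 1)) \<and>
             (\<not> l \<longrightarrow> sz_store \<Sigma>' - sz_store \<Sigma> \<le> C * (sz_store \<Sigma> ^ (d ^ k) + 1))"
proof -
  obtain C1 d1 C2 d2 where in_loop: "growth_in_loop s C1 d1" and outside: "growth_outside_loop s C2 d2"
    using stmt_growth by blast
  let ?C = "(C1 + C2) * 2 ^ max d1 d2" and ?d = "max d1 d2"
  have loop_case: "sz_store \<Sigma>' - sz_store \<Sigma> \<le> ?C * (sz_store (\<Sigma> |` domI \<Gamma>) ^ ?d + 1)"
    if "finite (dom \<Sigma>)" and "stype \<Gamma> True s \<Gamma>'" and "exec \<Sigma> s \<Sigma>'" for \<Gamma> \<Sigma> \<Gamma>' \<Sigma>'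
    using growth_in_loopD[OF in_loop that]
      poly_bound_le_two_power[of C1 "C1 + C2" d1 ?d "sz_store (\<Sigma> |` domI \<Gamma>)"] by simp
  have outside_case: "sz_store \<Sigma>' - sz_store \<Sigma> \<le> ?C * (sz_store \<Sigma> ^ (?d ^ 1) + 1)"
    if "finite (dom \<Sigma>)" and "stype \<Gamma> False s \<Gamma>'" and "exec \<Sigma> s \<Sigma>'" for \<Gamma> \<Sigma> \<Gamma>' \<Sigma>'
    using growth_outside_loopD[OF outside that]
      poly_bound_le_two_power[of C2 "C1 + C2" d2 ?d "sz_store \<Sigma>"] by simp
  show ?thesis
    by (intro exI[of _ ?C] exI[of _ ?d] exI[of _ 1]) (cases l; use loop_case outside_case in auto)
qed

end
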